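(* Let $K$ be a field finitely generated over ${\mathbb F}_p$, let $h_1,\dots,h_m\in K$ be such that $K=K^{\langle p\rangle}h_1\oplus\cdots\oplus K^{\langle p\rangle}h_m$, and define $\pi_1,\dots,\pi_m:K\to K$ by $f=\sum_{i=1}^m\pi_i(f)^ph_i$ for all $f\in K$. If $V\subseteq K$ is a finite-dimensional ${\mathbb F}_p$-subspace, then there exists a finite-dimensional ${\mathbb F}_p$-subspace $W\subseteq K$ containing $V$ such that $\pi_i(VW)\subseteq W$ for all $i=1,\dots,m$.
   Context: $K^{\langle p\rangle}=\{f^p\mid f\in K\}$ is the subfield of $p$-th powers; the extension $K/K^{\langle p\rangle}$ is finite. For ${\mathbb F}_p$-subspaces $V,W\subseteq K$, $VW$ denotes the ${\mathbb F}_p$-span of all products $vw$ with $v\in V$, $w\in W$. *)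

theory Defs
  imports Main "HOL-Computational_Algebra.Primes"
begin

text \<open>The ambient field K is modelled as a type of class field; coefficients from F_p
are the elements of the form of_nat n (the prime field, when CHAR = p is prime).\<close>

definition Fp_span :: "'a::field set \<Rightarrow> 'a set" where
  "Fp_span S = {x. \<exists>T c. finite T \<and> T \<subseteq> S \<and> x = (\<Sum>s\<in>T. of_nat (c s) * s)}"

definition Fp_subspace :: "'a::field set \<Rightarrow> bool" where
  "Fp_subspace V \<longleftrightarrow> 0 \<in> V \<and> (\<forall>x\<in>V. \<forall>y\<in>V. x + y \<in> V)
      \<and> (\<forall>x\<in>V. \<forall>n::nat. of_nat n * x \<in> V)"

definition Fp_fin_dim :: "'a::field set \<Rightarrow> bool" where
  "Fp_fin_dim V \<longleftrightarrow> (\<exists>S. finite S \<and> S \<subseteq> V \<and> Fp_span S = V)"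

definition Fp_prod :: "'a::field set \<Rightarrow> 'a set \<Rightarrow> 'a set" where
  "Fp_prod V W = Fp_span {v * w | v w. v \<in> V \<and> w \<in> W}"

definition is_subfield :: "'a::field set \<Rightarrow> bool" where
  "is_subfield F \<longleftrightarrow> 0 \<in> F \<and> 1 \<in> F \<and> (\<forall>x\<in>F. \<forall>y\<in>F. x + y \<in> F \<and> x * y \<in> F)
      \<and> (\<forall>x\<in>F. - x \<in> F \<and> inverse x \<in> F)"

definition generated_subfield :: "'a::field set \<Rightarrow> 'a set" where
  "generated_subfield S = \<Inter>{F. S \<subseteq> F \<and> is_subfield F}"

definition fin_gen_field :: "'a::field itself \<Rightarrow> bool" where
  "fin_gen_field _ \<longleftrightarrow> (\<exists>S::'a set. finite S \<and> generated_subfield S = UNIV)"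

end

(*
  Pick finitely many field generators G of K containing a spanning set of V, and let R_d be the
  F_p-span of the monomials in G of total degree at most d. Uniqueness of the expansion and the
  additivity of Frobenius make each \<pi>_i additive with \<pi>_i(a^p y) = a \<pi>_i(y). Writing a monomial
  as the p-th power of a monomial times a monomial with all exponents below p, the values of \<pi>_i
  on R_k are therefore monomials of degree at most k div p times finitely many fixed elements.
  Since K is the fraction field of the union of the R_d, a single nonzero D in some R_\<delta> clears
  their denominators, so that D \<pi>_i(R_k) lies in R_(k div p + E). Then W = D^-p R_L with
  L = p(\<delta> + E + 1) works: it contains R_1, which contains V, and for y in R_(L+1) we have
  \<pi>_i(D^-p y) = D^-p (D \<pi>_i(y)) D^(p-2), where (D \<pi>_i(y)) D^(p-2) lies in R_L.
*)
theory Submission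
  imports Defs "HOL.Modules"
begin

section \<open>F_p-subspaces and F_p-spans\<close>

lemma Fp_subspace_sum:
  assumes "Fp_subspace W" "\<And>s. s \<in> T \<Longrightarrow> f s \<in> W"
  shows "sum f T \<in> W"
  using assms(2)
  by (induction T rule: infinite_finite_induct) (use assms(1) in \<open>auto simp: Fp_subspace_def\<close>)

lemma Fp_subspace_uminus:
  fixes W :: "'a::field set"
  assumes "CHAR('a) > 0" "Fp_subspace W" "x \<in> W"
  shows "- x \<in> W"
proof -
  have "- x = of_nat (CHAR('a) - 1) * x"
    using assms(1) by (simp add: of_nat_diff)
  then show ?thesis
    using assms(2,3) unfolding Fp_subspace_def by metis
qed

lemma Fp_span_superset: "S \<subseteq> Fp_span S"
  unfolding Fp_span_def by (force intro: exI[of _ "\<lambda>_. 1"])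

lemma Fp_span_minimal:
  assumes "Fp_subspace W" "S \<subseteq> W"
  shows "Fp_span S \<subseteq> W"
proof
  fix x assume "x \<in> Fp_span S"
  then obtain T c where "T \<subseteq> S" "x = (\<Sum>s\<in>T. of_nat (c s) * s)"
    unfolding Fp_span_def by blast
  then show "x \<in> W"
    using assms unfolding Fp_subspace_def by (auto intro!: Fp_subspace_sum[OF assms(1)])
qed

lemma Fp_subspace_Fp_span: "Fp_subspace (Fp_span S)"
proof -
  have extend: "(\<Sum>s\<in>T. of_nat (c s) * s) = (\<Sum>s\<in>U. of_nat (if s \<in> T then c s else 0) * s)"
    if "finite U" "T \<subseteq> U" for T U and c :: "'a \<Rightarrow> nat"
    using that by (intro sum.mono_neutral_cong_left) auto
  have "x + y \<in> Fp_span S" if xy: "x \<in> Fp_span S" "y \<in> Fp_span S" for x y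
  proof -
    obtain T1 c1 where T1: "finite T1" "T1 \<subseteq> S" "x = (\<Sum>s\<in>T1. of_nat (c1 s) * s)"
      using xy(1) unfolding Fp_span_def by blast
    obtain T2 c2 where T2: "finite T2" "T2 \<subseteq> S" "y = (\<Sum>s\<in>T2. of_nat (c2 s) * s)"
      using xy(2) unfolding Fp_span_def by blast
    define c where "c s = (if s \<in> T1 then c1 s else 0) + (if s \<in> T2 then c2 s else 0)" for s
    have "x + y = (\<Sum>s\<in>T1 \<union> T2. of_nat (c s) * s)"
      using extend[of "T1 \<union> T2" T1 c1] extend[of "T1 \<union> T2" T2 c2] T1 T2
      by (simp add: c_def sum.distrib distrib_right)
    then show ?thesis
      unfolding Fp_span_def using T1 T2 by (intro CollectI exI[of _ "T1 \<union> T2"] exI[of _ c]) simp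
  qed
  moreover have "of_nat n * x \<in> Fp_span S" if x: "x \<in> Fp_span S" for x n
  proof -
    obtain T c where T: "finite T" "T \<subseteq> S" "x = (\<Sum>s\<in>T. of_nat (c s) * s)"
      using x unfolding Fp_span_def by blast
    have "of_nat n * x = (\<Sum>s\<in>T. of_nat (n * c s) * s)"
      unfolding T(3) by (simp add: sum_distrib_left mult.assoc)
    then show ?thesis
      unfolding Fp_span_def using T by (intro CollectI exI[of _ T] exI[of _ "\<lambda>s. n * c s"]) simp
  qed
  moreover have "0 \<in> Fp_span S"
    unfolding Fp_span_def by (intro CollectI exI[of _ "{}"]) simp
  ultimately show ?thesis
    unfolding Fp_subspace_def by blast
qed

lemma Fp_span_mono: "S \<subseteq> S' \<Longrightarrow> Fp_span S \<subseteq> Fp_span S'"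
  by (meson Fp_span_minimal Fp_span_superset Fp_subspace_Fp_span order_trans)

lemma Fp_fin_dim_Fp_span: "finite S \<Longrightarrow> Fp_fin_dim (Fp_span S)"
  unfolding Fp_fin_dim_def using Fp_span_superset by blast

lemma Fp_prod_mono: "V \<subseteq> V' \<Longrightarrow> Fp_prod V W \<subseteq> Fp_prod V' W"
  unfolding Fp_prod_def by (rule Fp_span_mono) blast

lemma Fp_span_mult:
  assumes "Fp_subspace Z" "\<And>x y. x \<in> X \<Longrightarrow> y \<in> Y \<Longrightarrow> x * y \<in> Z"
    and "x \<in> Fp_span X" "y \<in> Fp_span Y"
  shows "x * y \<in> Z"
proof -
  have "Fp_span X \<subseteq> {x. \<forall>y \<in> Fp_span Y. x * y \<in> Z}"
  proof (rule Fp_span_minimal)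
    have "Fp_span Y \<subseteq> {y. x * y \<in> Z}" if "x \<in> X" for x
      using assms(1,2) that
      by (intro Fp_span_minimal) (auto simp: Fp_subspace_def distrib_left mult.left_commute)
    then show "X \<subseteq> {x. \<forall>y \<in> Fp_span Y. x * y \<in> Z}"
      by blast
  qed (use assms(1) in \<open>auto simp: Fp_subspace_def distrib_right mult.assoc\<close>)
  then show ?thesis
    using assms(3,4) by blast
qed

lemma additive_of_nat_mult:
  fixes f :: "'a::comm_ring_1 \<Rightarrow> 'b::comm_ring_1"
  assumes "additive f"
  shows "f (of_nat n * x) = of_nat n * f x"
  by (induction n) (simp_all add: additive.zero[OF assms] additive.add[OF assms] distrib_right)

lemma additive_image_Fp_span_subset:
  assumes "additive f" "Fp_subspace W" "f ` S \<subseteq> W"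
  shows "f ` Fp_span S \<subseteq> W"
proof -
  have "Fp_subspace {x. f x \<in> W}"
    using assms(2)
    by (simp add: Fp_subspace_def additive.zero[OF assms(1)] additive.add[OF assms(1)]
        additive_of_nat_mult[OF assms(1)])
  then have "Fp_span S \<subseteq> {x. f x \<in> W}"
    using assms(3) by (intro Fp_span_minimal) auto
  then show ?thesis
    by blast
qed

lemma Fp_subspace_additive_image:
  assumes "additive f" "Fp_subspace V"
  shows "Fp_subspace (f ` V)"
  using assms(2) unfolding Fp_subspace_def
  by (auto simp flip: additive.zero[OF assms(1)] additive.add[OF assms(1)]
      additive_of_nat_mult[OF assms(1)])

lemma Fp_span_additive_image:
  assumes "additive f"
  shows "Fp_span (f ` S) = f ` Fp_span S"
proof
  show "Fp_span (f ` S) \<subseteq> f ` Fp_span S"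
    using Fp_span_superset
    by (intro Fp_span_minimal Fp_subspace_additive_image[OF assms] Fp_subspace_Fp_span) blast
  show "f ` Fp_span S \<subseteq> Fp_span (f ` S)"
    using Fp_span_superset
    by (intro additive_image_Fp_span_subset[OF assms] Fp_subspace_Fp_span) blast
qed

lemma Fp_fin_dim_additive_image:
  assumes "additive f" "Fp_fin_dim V"
  shows "Fp_fin_dim (f ` V)"
proof -
  obtain S where "finite S" "S \<subseteq> V" "Fp_span S = V"
    using assms(2) unfolding Fp_fin_dim_def by blast
  then have "finite (f ` S)" "f ` S \<subseteq> f ` V" "Fp_span (f ` S) = f ` V"
    using Fp_span_additive_image[OF assms(1)] by auto
  then show ?thesis
    unfolding Fp_fin_dim_def by blast
qed

lemma generated_subfield_mono: "S \<subseteq> S' \<Longrightarrow> generated_subfield S \<subseteq> generated_subfield S'"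
  unfolding generated_subfield_def by blast

lemma generated_subfield_fraction:
  fixes A :: "'a::field set"
  assumes "generated_subfield S = UNIV" "S \<subseteq> A" "0 \<in> A" "1 \<in> A"
    and add: "\<And>x y. x \<in> A \<Longrightarrow> y \<in> A \<Longrightarrow> x + y \<in> A"
    and mult: "\<And>x y. x \<in> A \<Longrightarrow> y \<in> A \<Longrightarrow> x * y \<in> A"
    and uminus: "\<And>x. x \<in> A \<Longrightarrow> - x \<in> A"
  shows "\<exists>a\<in>A. \<exists>b\<in>A. b \<noteq> 0 \<and> z = a / b"
proof -
  define F where "F = {a / b | a b. a \<in> A \<and> b \<in> A \<and> b \<noteq> 0}"
  have frac: "a / b \<in> F" if "a \<in> A" "b \<in> A" "b \<noteq> 0" for a b
    unfolding F_def using that by blast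
  have A_F: "A \<subseteq> F"
    using frac[OF _ assms(4)] by fastforce
  have "is_subfield F"
    unfolding is_subfield_def
  proof (intro conjI ballI)
    show "0 \<in> F" "1 \<in> F"
      using A_F assms(3,4) by auto
  next
    fix x y assume "x \<in> F" "y \<in> F"
    then obtain a b c d where ab: "a \<in> A" "b \<in> A" "b \<noteq> 0" "x = a / b"
      and cd: "c \<in> A" "d \<in> A" "d \<noteq> 0" "y = c / d"
      unfolding F_def by blast
    have "x + y = (a * d + c * b) / (b * d)"
      using ab cd by (simp add: field_simps)
    then show "x + y \<in> F"
      using ab cd by (simp add: frac add mult)
    show "x * y \<in> F"
      using ab cd by (simp add: frac mult)
  next
    fix x assume "x \<in> F"
    then obtain a b where ab: "a \<in> A" "b \<in> A" "b \<noteq> 0" "x = a / b"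
      unfolding F_def by blast
    show "- x \<in> F"
      using ab frac[of "- a" b] uminus by simp
    show "inverse x \<in> F"
      using ab frac[of b a] A_F assms(3) by (cases "a = 0") auto
  qed
  then have "UNIV \<subseteq> F"
    using assms(1,2) A_F unfolding generated_subfield_def by blast
  then show ?thesis
    unfolding F_def by blast
qed

section \<open>The degree filtration of F_p[G]\<close>

definition monomial :: "'a::comm_semiring_1 set \<Rightarrow> ('a \<Rightarrow> nat) \<Rightarrow> 'a" where
  "monomial G e = (\<Prod>x\<in>G. x ^ e x)"

definition exponents :: "'a set \<Rightarrow> nat \<Rightarrow> ('a \<Rightarrow> nat) set" where
  "exponents G d = {e. (\<forall>x. x \<notin> G \<longrightarrow> e x = 0) \<and> (\<Sum>x\<in>G. e x) \<le> d}"

definition reduced_exponents :: "'a set \<Rightarrow> nat \<Rightarrow> ('a \<Rightarrow> nat) set" where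
  "reduced_exponents G p = {r. \<forall>x. (x \<in> G \<longrightarrow> r x \<in> {..<p}) \<and> (x \<notin> G \<longrightarrow> r x = 0)}"

definition degree_span :: "'a::field set \<Rightarrow> nat \<Rightarrow> 'a set" where
  "degree_span G d = Fp_span (monomial G ` exponents G d)"

lemma finite_exponents:
  assumes "finite G"
  shows "finite (exponents G d)"
proof (rule finite_subset)
  show "exponents G d \<subseteq> {e. \<forall>x. (x \<in> G \<longrightarrow> e x \<in> {..d}) \<and> (x \<notin> G \<longrightarrow> e x = 0)}"
    unfolding exponents_def using assms by (auto dest: member_le_sum[of _ G] intro: order_trans)
qed (use assms in \<open>intro finite_set_of_finite_funs; simp\<close>)

lemma finite_reduced_exponents: "finite G \<Longrightarrow> finite (reduced_exponents G p)"
  unfolding reduced_exponents_def by (intro finite_set_of_finite_funs) simp_all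

lemma exponents_mono: "d \<le> d' \<Longrightarrow> exponents G d \<subseteq> exponents G d'"
  unfolding exponents_def by auto

lemma exponents_add:
  "e \<in> exponents G d \<Longrightarrow> e' \<in> exponents G d' \<Longrightarrow> (\<lambda>x. e x + e' x) \<in> exponents G (d + d')"
  unfolding exponents_def by (auto simp: sum.distrib)

lemma exponents_div:
  assumes "e \<in> exponents G d" "p > 0"
  shows "(\<lambda>x. e x div p) \<in> exponents G (d div p)"
proof -
  have "p * (\<Sum>x\<in>G. e x div p) \<le> (\<Sum>x\<in>G. e x)"
    by (simp add: sum_distrib_left sum_mono)
  also have "\<dots> \<le> d"
    using assms(1) unfolding exponents_def by simp
  finally show ?thesis
    using assms unfolding exponents_def by (simp add: less_eq_div_iff_mult_less_eq mult.commute)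
qed

lemma exponents_mod:
  "e \<in> exponents G d \<Longrightarrow> p > 0 \<Longrightarrow> (\<lambda>x. e x mod p) \<in> reduced_exponents G p"
  unfolding exponents_def reduced_exponents_def by simp

lemma monomial_add: "monomial G (\<lambda>x. e x + e' x) = monomial G e * monomial G e'"
  unfolding monomial_def by (simp add: power_add prod.distrib)

lemma monomial_div_mod:
  "monomial G e = monomial G (\<lambda>x. e x div p) ^ p * monomial G (\<lambda>x. e x mod p)"
proof -
  have "x ^ e x = (x ^ (e x div p)) ^ p * x ^ (e x mod p)" for x
    by (metis power_add power_mult mult.commute div_mult_mod_eq)
  then show ?thesis
    unfolding monomial_def by (simp add: prod.distrib prod_power_distrib)
qed

lemma Fp_subspace_degree_span: "Fp_subspace (degree_span G d)"
  unfolding degree_span_def by (rule Fp_subspace_Fp_span)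

lemma Fp_fin_dim_degree_span: "finite G \<Longrightarrow> Fp_fin_dim (degree_span G d)"
  unfolding degree_span_def by (simp add: Fp_fin_dim_Fp_span finite_exponents)

lemma monomial_in_degree_span: "e \<in> exponents G d \<Longrightarrow> monomial G e \<in> degree_span G d"
  unfolding degree_span_def using Fp_span_superset by blast

lemma degree_span_mono: "d \<le> d' \<Longrightarrow> degree_span G d \<subseteq> degree_span G d'"
  unfolding degree_span_def by (intro Fp_span_mono image_mono exponents_mono)

lemma degree_span_mult:
  assumes "x \<in> degree_span G d" "y \<in> degree_span G d'"
  shows "x * y \<in> degree_span G (d + d')"
proof (rule Fp_span_mult[OF Fp_subspace_degree_span _ assms[unfolded degree_span_def]])
  fix a b assume "a \<in> monomial G ` exponents G d" "b \<in> monomial G ` exponents G d'"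
  then show "a * b \<in> degree_span G (d + d')"
    by (auto simp flip: monomial_add intro!: monomial_in_degree_span exponents_add)
qed

lemma one_in_degree_span: "1 \<in> degree_span G d"
proof -
  have "monomial G (\<lambda>_. 0) = 1" "(\<lambda>_. 0) \<in> exponents G d"
    unfolding monomial_def exponents_def by simp_all
  then show ?thesis
    by (metis monomial_in_degree_span)
qed

lemma degree_span_power: "x \<in> degree_span G d \<Longrightarrow> x ^ n \<in> degree_span G (n * d)"
  by (induction n) (simp_all add: one_in_degree_span degree_span_mult)

lemma generator_in_degree_span:
  assumes "finite G" "x \<in> G"
  shows "x \<in> degree_span G 1"
proof -
  let ?e = "\<lambda>y. if y = x then 1 else 0"
  have "monomial G ?e = x"
    unfolding monomial_def using assms by (simp add: if_distrib[of "power _"] cong: if_cong)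
  moreover have "?e \<in> exponents G 1"
    unfolding exponents_def using assms by simp
  ultimately show ?thesis
    by (metis monomial_in_degree_span)
qed

lemma degree_span_fraction:
  fixes G :: "'a::field set"
  assumes "CHAR('a) > 0" "finite G" "generated_subfield G = UNIV"
  shows "\<exists>d a b. a \<in> degree_span G d \<and> b \<in> degree_span G d \<and> b \<noteq> 0 \<and> z = a / b"
proof -
  define A where "A = (\<Union>d. degree_span G d)"
  have closed: "x + y \<in> A" "x * y \<in> A" if xy: "x \<in> A" "y \<in> A" for x y
  proof -
    obtain d d' where "x \<in> degree_span G d" "y \<in> degree_span G d'"
      using xy unfolding A_def by blast
    moreover have "degree_span G d \<union> degree_span G d' \<subseteq> degree_span G (d + d')"
      by (simp add: degree_span_mono)
    ultimately have "x + y \<in> degree_span G (d + d')" "x * y \<in> degree_span G (d + d')"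
      using Fp_subspace_degree_span[of G "d + d'"] degree_span_mult
      unfolding Fp_subspace_def by blast+
    then show "x + y \<in> A" "x * y \<in> A"
      unfolding A_def by blast+
  qed
  have uminus: "- x \<in> A" if "x \<in> A" for x
    using that Fp_subspace_uminus[OF assms(1) Fp_subspace_degree_span] unfolding A_def by blast
  have "G \<subseteq> A"
    unfolding A_def using generator_in_degree_span[OF assms(2)] by blast
  moreover have "0 \<in> A" "1 \<in> A"
    unfolding A_def using Fp_subspace_degree_span[of G 0] one_in_degree_span[of G 0]
    unfolding Fp_subspace_def by blast+
  ultimately obtain a b where "a \<in> A" "b \<in> A" "b \<noteq> 0" "z = a / b"
    using generated_subfield_fraction[OF assms(3) _ _ _ closed uminus] by blast
  moreover from this obtain d d' where "a \<in> degree_span G d" "b \<in> degree_span G d'"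
    unfolding A_def by blast
  moreover have "degree_span G d \<union> degree_span G d' \<subseteq> degree_span G (d + d')"
    by (simp add: degree_span_mono)
  ultimately show ?thesis
    by blast
qed

lemma common_denominator:
  fixes G :: "'a::field set"
  assumes "CHAR('a) > 0" "finite G" "generated_subfield G = UNIV" "finite Z"
  shows "\<exists>D \<delta> E. D \<in> degree_span G \<delta> \<and> D \<noteq> 0 \<and> (\<forall>z\<in>Z. z * D \<in> degree_span G E)"
  using assms(4)
proof (induction Z rule: finite_induct)
  case empty
  show ?case
    using one_in_degree_span by fastforce
next
  case (insert z Z)
  then obtain D \<delta> E where D: "D \<in> degree_span G \<delta>" "D \<noteq> 0" "\<forall>z\<in>Z. z * D \<in> degree_span G E"
    by blast
  obtain d a b where ab: "a \<in> degree_span G d" "b \<in> degree_span G d" "b \<noteq> 0" "z = a / b"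
    using degree_span_fraction[OF assms(1-3)] by blast
  have "z * (D * b) = a * D"
    using ab by simp
  moreover have "a * D \<in> degree_span G (d + \<delta>)"
    using ab D degree_span_mult by blast
  moreover have "(z' * D) * b \<in> degree_span G (E + d)" if "z' \<in> Z" for z'
    using D(3) that ab(2) degree_span_mult by blast
  ultimately have "\<forall>z'\<in>insert z Z. z' * (D * b) \<in> degree_span G (E + d + \<delta>)"
    using degree_span_mono[of "d + \<delta>" "E + d + \<delta>" G] degree_span_mono[of "E + d" "E + d + \<delta>" G]
    by (auto simp: ac_simps)
  moreover have "D * b \<in> degree_span G (\<delta> + d)" "D * b \<noteq> 0"
    using D ab by (simp_all add: degree_span_mult)
  ultimately show ?case
    by blast
qed

section \<open>Coordinates with respect to a basis of K over K^p\<close>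

locale frobenius_coordinates =
  fixes p m :: nat and h :: "nat \<Rightarrow> 'a::field" and \<pi> :: "nat \<Rightarrow> 'a \<Rightarrow> 'a"
  assumes prime_p: "prime p" and CHAR_eq: "CHAR('a) = p"
    and independent: "\<forall>g. (\<Sum>i<m. g i ^ p * h i) = 0 \<longrightarrow> (\<forall>i<m. g i = 0)"
    and expansion: "\<forall>f. f = (\<Sum>i<m. \<pi> i f ^ p * h i)"
begin

lemma frobenius_add: "(x + y :: 'a) ^ p = x ^ p + y ^ p"
  by (rule freshmans_dream) (simp_all add: prime_p CHAR_eq)

lemma frobenius_diff: "(x - y :: 'a) ^ p = x ^ p - y ^ p"
  using frobenius_add[of "x - y" y] by simp

lemma sum_coordinates [simp]: "(\<Sum>i<m. \<pi> i f ^ p * h i) = f"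
  by (rule expansion[rule_format, symmetric])

lemma coordinates_unique:
  assumes "(\<Sum>i<m. a i ^ p * h i) = (\<Sum>i<m. b i ^ p * h i)" "i < m"
  shows "a i = b i"
proof -
  have "(\<Sum>i<m. (a i - b i) ^ p * h i) = 0"
    using assms(1) by (simp add: frobenius_diff left_diff_distrib sum_subtractf)
  then show ?thesis
    using spec[OF independent, of "\<lambda>i. a i - b i"] assms(2) by simp
qed

lemma additive_coordinate:
  assumes "i < m"
  shows "additive (\<pi> i)"
proof
  fix x y
  have "(\<Sum>i<m. (\<pi> i x + \<pi> i y) ^ p * h i) = (\<Sum>i<m. \<pi> i (x + y) ^ p * h i)"
    by (simp add: frobenius_add distrib_right sum.distrib)
  from coordinates_unique[OF this assms] show "\<pi> i (x + y) = \<pi> i x + \<pi> i y"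
    by simp
qed

lemma coordinate_pth_power_mult:
  assumes "i < m"
  shows "\<pi> i (a ^ p * y) = a * \<pi> i y"
proof -
  have "(\<Sum>i<m. (a * \<pi> i y) ^ p * h i) = (\<Sum>i<m. \<pi> i (a ^ p * y) ^ p * h i)"
    by (simp add: power_mult_distrib mult.assoc flip: sum_distrib_left)
  from coordinates_unique[OF this assms] show ?thesis
    by simp
qed

lemma coordinate_times_denominator:
  assumes "i < m" "y \<in> degree_span G k"
    and denom: "\<forall>r\<in>reduced_exponents G p. \<pi> i (monomial G r) * D \<in> degree_span G E"
  shows "\<pi> i y * D \<in> degree_span G (k div p + E)"
proof -
  have "additive (\<lambda>y. \<pi> i y * D)"
    by standard (simp add: additive.add[OF additive_coordinate[OF assms(1)]] distrib_right)
  moreover have "\<pi> i (monomial G e) * D \<in> degree_span G (k div p + E)" if "e \<in> exponents G k" for e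
  proof -
    have "p > 0"
      using prime_p prime_gt_0_nat by blast
    have "\<pi> i (monomial G e) * D
          = monomial G (\<lambda>x. e x div p) * (\<pi> i (monomial G (\<lambda>x. e x mod p)) * D)"
      by (subst monomial_div_mod[of G e p]) (simp add: coordinate_pth_power_mult[OF assms(1)])
    also have "\<dots> \<in> degree_span G (k div p + E)"
      using denom exponents_mod[OF that \<open>p > 0\<close>]
      by (intro degree_span_mult monomial_in_degree_span exponents_div[OF that \<open>p > 0\<close>]) blast
    finally show ?thesis .
  qed
  ultimately show ?thesis
    using assms(2) additive_image_Fp_span_subset[OF _ Fp_subspace_degree_span]
    unfolding degree_span_def by blast
qed

lemma scaled_coordinate_in_degree_span:
  assumes "i < m" "y \<in> degree_span G (p * (\<delta> + E + 1) + 1)"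
    and D: "D \<in> degree_span G \<delta>" "D \<noteq> 0"
    and denom: "\<forall>r\<in>reduced_exponents G p. \<pi> i (monomial G r) * D \<in> degree_span G E"
  shows "\<pi> i (y / D ^ p) * D ^ p \<in> degree_span G (p * (\<delta> + E + 1))"
proof -
  obtain q where p: "p = q + 2"
    using prime_p prime_ge_2_nat by (metis le_add_diff_inverse2)
  have "(p * (\<delta> + E + 1) + 1) div p = \<delta> + E + 1"
    using div_mult_self1[of p 1 "\<delta> + E + 1"] p by (simp add: ac_simps)
  then have "\<pi> i y * D \<in> degree_span G (\<delta> + E + 1 + E)"
    using coordinate_times_denominator[OF assms(1,2) denom] by simp
  then have "\<pi> i y * D * D ^ q \<in> degree_span G (\<delta> + E + 1 + E + q * \<delta>)"
    using degree_span_mult degree_span_power[OF D(1)] by blast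
  moreover have "\<delta> + E + 1 + E + q * \<delta> \<le> p * (\<delta> + E + 1)"
    unfolding p by (simp add: algebra_simps)
  moreover have "\<pi> i (y / D ^ p) * D ^ p = \<pi> i y * D * D ^ q"
  proof -
    have "y / D ^ p = inverse D ^ p * y"
      by (simp add: divide_inverse power_inverse mult.commute)
    then have "\<pi> i (y / D ^ p) = inverse D * \<pi> i y"
      using coordinate_pth_power_mult[OF assms(1)] by metis
    then show ?thesis
      using D(2) unfolding p by (simp add: field_simps power_add)
  qed
  ultimately show ?thesis
    using degree_span_mono by (metis subsetD)
qed

lemma invariant_subspace_exists:
  assumes "finite G" and D: "D \<in> degree_span G \<delta>" "D \<noteq> 0"
    and denom: "\<forall>i<m. \<forall>r\<in>reduced_exponents G p. \<pi> i (monomial G r) * D \<in> degree_span G E"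
  shows "\<exists>W. Fp_subspace W \<and> Fp_fin_dim W \<and> degree_span G 1 \<subseteq> W \<and>
           (\<forall>i<m. \<pi> i ` Fp_prod (degree_span G 1) W \<subseteq> W)"
proof -
  define L where "L = p * (\<delta> + E + 1)"
  define W where "W = (\<lambda>y. y / D ^ p) ` degree_span G L"
  have scale: "additive (\<lambda>y. y / D ^ p)"
    by standard (simp add: add_divide_distrib)
  have W: "Fp_subspace W" "Fp_fin_dim W"
    unfolding W_def
    by (rule Fp_subspace_additive_image[OF scale Fp_subspace_degree_span],
        rule Fp_fin_dim_additive_image[OF scale Fp_fin_dim_degree_span[OF assms(1)]])
  have in_W: "x \<in> W" if "x * D ^ p \<in> degree_span G L" for x
    unfolding W_def using that D(2) by (force intro: image_eqI[of x _ "x * D ^ p"])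
  have "degree_span G 1 \<subseteq> W"
  proof
    fix v assume "v \<in> degree_span G 1"
    then have "v * D ^ p \<in> degree_span G (1 + p * \<delta>)"
      using degree_span_mult degree_span_power[OF D(1)] by blast
    moreover have "1 + p * \<delta> \<le> L"
      using prime_gt_0_nat[OF prime_p] unfolding L_def by (simp add: algebra_simps)
    ultimately show "v \<in> W"
      using degree_span_mono in_W by blast
  qed
  moreover have "\<pi> i (v * w) \<in> W" if "i < m" "v \<in> degree_span G 1" "w \<in> W" for i v w
  proof -
    obtain y where y: "y \<in> degree_span G L" "w = y / D ^ p"
      using \<open>w \<in> W\<close> unfolding W_def by blast
    have "v * y \<in> degree_span G (L + 1)"
      using degree_span_mult[OF y(1) that(2)] by (simp add: mult.commute)
    then have "\<pi> i (v * y / D ^ p) * D ^ p \<in> degree_span G L"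
      using scaled_coordinate_in_degree_span[OF that(1) _ D] denom that(1) unfolding L_def by blast
    then show ?thesis
      using y(2) in_W by simp
  qed
  then have "\<pi> i ` Fp_prod (degree_span G 1) W \<subseteq> W" if "i < m" for i
    unfolding Fp_prod_def using that
    by (intro additive_image_Fp_span_subset[OF additive_coordinate W(1)]) blast+
  ultimately show ?thesis
    using W by blast
qed

end


theorem proposition5p2:
  fixes p m :: nat and h :: "nat \<Rightarrow> 'a::field" and \<pi> :: "nat \<Rightarrow> 'a \<Rightarrow> 'a"
    and V :: "'a set"
  assumes "prime p" and "CHAR('a) = p"
    and "fin_gen_field TYPE('a)"
    and span: "\<forall>f::'a. \<exists>g. f = (\<Sum>i<m. g i ^ p * h i)"
    and indep: "\<forall>g. (\<Sum>i<m. g i ^ p * h i) = 0 \<longrightarrow> (\<forall>i<m. g i = 0)"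
    and pi: "\<forall>f. f = (\<Sum>i<m. \<pi> i f ^ p * h i)"
    and "Fp_subspace V" and "Fp_fin_dim V"
  shows "\<exists>W. Fp_subspace W \<and> Fp_fin_dim W \<and> V \<subseteq> W \<and>
           (\<forall>i<m. \<pi> i ` Fp_prod V W \<subseteq> W)"
proof -
  interpret frobenius_coordinates p m h \<pi>
    using assms by unfold_locales
  obtain S :: "'a set" where S: "finite S" "generated_subfield S = UNIV"
    using assms(3) unfolding fin_gen_field_def by blast
  obtain B where B: "finite B" "Fp_span B = V"
    using assms(8) unfolding Fp_fin_dim_def by blast
  define G where "G = S \<union> B"
  have G: "finite G" "generated_subfield G = UNIV"
    unfolding G_def using S B generated_subfield_mono[of S "S \<union> B"] by auto
  have V: "V \<subseteq> degree_span G 1"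
    unfolding B(2)[symmetric] using generator_in_degree_span[OF G(1)]
    by (intro Fp_span_minimal Fp_subspace_degree_span) (auto simp: G_def)
  define Z where "Z = {\<pi> i (monomial G r) | i r. i < m \<and> r \<in> reduced_exponents G p}"
  have "CHAR('a) > 0"
    using assms(1,2) prime_gt_0_nat by blast
  moreover have "finite Z"
    unfolding Z_def using finite_reduced_exponents[OF G(1)] by (intro finite_image_set2) simp_all
  ultimately obtain D \<delta> E where D: "D \<in> degree_span G \<delta>" "D \<noteq> 0"
    and "\<forall>z\<in>Z. z * D \<in> degree_span G E"
    using common_denominator[OF _ G(1,2)] by blast
  then have "\<forall>i<m. \<forall>r\<in>reduced_exponents G p. \<pi> i (monomial G r) * D \<in> degree_span G E"
    unfolding Z_def by blast
  then obtain W where W: "Fp_subspace W" "Fp_fin_dim W" "degree_span G 1 \<subseteq> W"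
    "\<forall>i<m. \<pi> i ` Fp_prod (degree_span G 1) W \<subseteq> W"
    using invariant_subspace_exists[OF G(1) D] by blast
  have "\<pi> i ` Fp_prod V W \<subseteq> W" if "i < m" for i
    using W(4) that image_mono[OF Fp_prod_mono[OF V], of "\<pi> i" W] by blast
  then show ?thesis
    using W(1,2) order_trans[OF V W(3)] by blast
qed

end
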